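(* Let $G=(V,E,s_0,s_1)$ be a switch graph and $o,d\in V$ with $o\neq d$. If there exists a switching flow $\mathbf{x}$, then $\textsc{Run}(G,o,d)$ terminates, and its run profile satisfies $\mathbf{x}(G,o,d)\le\mathbf{x}$ componentwise.
   Context: A switch graph is a 4-tuple $G=(V,E,s_0,s_1)$ where $V$ is a finite vertex set, $s_0,s_1:V\to V$, and $E=\{(v,s_0(v)):v\in V\}\cup\{(v,s_1(v)):v\in V\}$ (loops allowed; possibly $s_0(v)=s_1(v)$). The procedure $\textsc{Run}(G,o,d)$: maintain arrays $\mathtt{s\_curr},\mathtt{s\_next}$ indexed by $V$, initially $\mathtt{s\_curr}[v]=s_0(v)$, $\mathtt{s\_next}[v]=s_1(v)$; set $v:=o$; while $v\neq d$: $w:=\mathtt{s\_curr}[v]$, swap $\mathtt{s\_curr}[v],\mathtt{s\_next}[v]$, $v:=w$ (traversing edge $(v,w)$). When the run terminates, its run profile $\mathbf{x}(G,o,d):E\to\mathbb{N}_0$ assigns to each edge the number of times it was traversed. For $v\in V$, $E^+(v)$ and $E^-(v)$ denote the outgoing and incoming edges of $v$. A switching flow is a function $\mathbf{x}:E\to\mathbb{N}_0$, $e\mapsto x_e$, such that for all $v\in V$: (a) $\sum_{e\in E^+(v)}x_e-\sum_{e\in E^-(v)}x_e$ equals $1$ if $v=o$, $-1$ if $v=d$, and $0$ otherwise; and (b) $0\le x_{(v,s_1(v))}\le x_{(v,s_0(v))}\le x_{(v,s_1(v))}+1$. *)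

theory Defs
  imports Main
begin

definition switch_graph :: "'v set \<Rightarrow> ('v \<Rightarrow> 'v) \<Rightarrow> ('v \<Rightarrow> 'v) \<Rightarrow> bool" where
  "switch_graph V s0 s1 \<longleftrightarrow> finite V \<and> s0 ` V \<subseteq> V \<and> s1 ` V \<subseteq> V"

definition sg_edges :: "'v set \<Rightarrow> ('v \<Rightarrow> 'v) \<Rightarrow> ('v \<Rightarrow> 'v) \<Rightarrow> ('v \<times> 'v) set" where
  "sg_edges V s0 s1 = {(v, s0 v) | v. v \<in> V} \<union> {(v, s1 v) | v. v \<in> V}"

definition out_edges :: "('v \<times> 'v) set \<Rightarrow> 'v \<Rightarrow> ('v \<times> 'v) set" where
  "out_edges E v = {e \<in> E. fst e = v}"

definition in_edges :: "('v \<times> 'v) set \<Rightarrow> 'v \<Rightarrow> ('v \<times> 'v) set" where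
  "in_edges E v = {e \<in> E. snd e = v}"

text \<open>Switching flow from orig to dest (values of x outside the edge set are irrelevant).\<close>
definition switching_flow ::
  "'v set \<Rightarrow> ('v \<Rightarrow> 'v) \<Rightarrow> ('v \<Rightarrow> 'v) \<Rightarrow> 'v \<Rightarrow> 'v \<Rightarrow> ('v \<times> 'v \<Rightarrow> nat) \<Rightarrow> bool" where
  "switching_flow V s0 s1 orig dest x \<longleftrightarrow>
     (\<forall>v\<in>V.
        int (\<Sum>e\<in>out_edges (sg_edges V s0 s1) v. x e) - int (\<Sum>e\<in>in_edges (sg_edges V s0 s1) v. x e)
          = (if v = orig then 1 else if v = dest then -1 else 0)
      \<and> x (v, s1 v) \<le> x (v, s0 v) \<and> x (v, s0 v) \<le> x (v, s1 v) + 1)"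

text \<open>State of Run: (current vertex, s_curr array, s_next array). One loop iteration.\<close>
fun run_step :: "'v \<times> ('v \<Rightarrow> 'v) \<times> ('v \<Rightarrow> 'v) \<Rightarrow> 'v \<times> ('v \<Rightarrow> 'v) \<times> ('v \<Rightarrow> 'v)" where
  "run_step (v, cur, nxt) = (cur v, cur(v := nxt v), nxt(v := cur v))"

text \<open>Vertex occupied after i loop iterations (ignoring the loop guard).\<close>
definition run_pos :: "('v \<Rightarrow> 'v) \<Rightarrow> ('v \<Rightarrow> 'v) \<Rightarrow> 'v \<Rightarrow> nat \<Rightarrow> 'v" where
  "run_pos s0 s1 orig i = fst ((run_step ^^ i) (orig, s0, s1))"

definition run_terminates :: "('v \<Rightarrow> 'v) \<Rightarrow> ('v \<Rightarrow> 'v) \<Rightarrow> 'v \<Rightarrow> 'v \<Rightarrow> bool" where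
  "run_terminates s0 s1 orig dest \<longleftrightarrow> (\<exists>n. run_pos s0 s1 orig n = dest)"

definition run_length :: "('v \<Rightarrow> 'v) \<Rightarrow> ('v \<Rightarrow> 'v) \<Rightarrow> 'v \<Rightarrow> 'v \<Rightarrow> nat" where
  "run_length s0 s1 orig dest = (LEAST n. run_pos s0 s1 orig n = dest)"

definition run_profile :: "('v \<Rightarrow> 'v) \<Rightarrow> ('v \<Rightarrow> 'v) \<Rightarrow> 'v \<Rightarrow> 'v \<Rightarrow> 'v \<times> 'v \<Rightarrow> nat" where
  "run_profile s0 s1 orig dest e =
     card {i. i < run_length s0 s1 orig dest \<and>
              (run_pos s0 s1 orig i, run_pos s0 s1 orig (Suc i)) = e}"

end

theory Submission imports Defs begin

text \<open>
  The walk leaves every vertex alternately along \<open>s\<^sub>0\<close> and \<open>s\<^sub>1\<close>, so after \<open>m\<close> visits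
  to \<open>v\<close> it has traversed \<open>(v, s\<^sub>0 v)\<close> \<open>\<lceil>m/2\<rceil>\<close> times and \<open>(v, s\<^sub>1 v)\<close> \<open>\<lfloor>m/2\<rfloor>\<close> times
  (or \<open>m\<close> times if \<open>s\<^sub>0 v = s\<^sub>1 v\<close>). By induction along the run: while \<open>d\<close> has not been
  reached and no edge has been traversed more than \<open>x\<^sub>e\<close> times, the number of visits to
  the current vertex \<open>v \<noteq> d\<close> is at most \<open>[v = o]\<close> plus the inflow of \<open>x\<close> into \<open>v\<close>, which
  by flow conservation is the outflow of \<open>x\<close> at \<open>v\<close>; the balance condition (b) splits
  this bound between the two outgoing edges exactly as the walk does. Since every step
  traverses an edge, \<open>d\<close> is reached within \<open>\<Sum>\<^sub>e x\<^sub>e\<close> steps.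
\<close>

lemma card_lessThan_filter_eq_sum: "card {i. i < (n::nat) \<and> P i} = (\<Sum>i<n. of_bool (P i))"
proof -
  have "{i. i < n \<and> P i} = {..<n} \<inter> {i. P i}" by auto
  then show ?thesis by simp
qed

lemma out_edges_sg_edges:
  "v \<in> V \<Longrightarrow> out_edges (sg_edges V s0 s1) v = {(v, s0 v), (v, s1 v)}"
  unfolding out_edges_def sg_edges_def by auto

lemma finite_sg_edges: "switch_graph V s0 s1 \<Longrightarrow> finite (sg_edges V s0 s1)"
  unfolding switch_graph_def sg_edges_def by auto

lemma switching_flow_outflow:
  assumes "switching_flow V s0 s1 orig dest x" "v \<in> V" "v \<noteq> dest"
  shows "(\<Sum>e\<in>out_edges (sg_edges V s0 s1) v. x e) =
           of_bool (v = orig) + (\<Sum>e\<in>in_edges (sg_edges V s0 s1) v. x e)"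
proof -
  have "int (\<Sum>e\<in>out_edges (sg_edges V s0 s1) v. x e) - int (\<Sum>e\<in>in_edges (sg_edges V s0 s1) v. x e) =
          (if v = orig then 1 else 0)"
    using assms unfolding switching_flow_def by auto
  moreover have "int a - int b = (if c then 1 else 0) \<Longrightarrow> a = of_bool c + b" for a b :: nat and c
    by (cases c) auto
  ultimately show ?thesis by blast
qed

lemma balanced_halves_le:
  fixes m a b :: nat
  assumes "m \<le> a + b" "b \<le> a" "a \<le> b + 1"
  shows "(m + 1) div 2 \<le> a" "m div 2 \<le> b"
  using assms by presburger+

lemma run_pos_0 [simp]: "run_pos s0 s1 orig 0 = orig"
  by (simp add: run_pos_def)

context
  fixes s0 s1 :: "'v \<Rightarrow> 'v" and orig :: 'v
begin

definition run_edge :: "nat \<Rightarrow> 'v \<times> 'v" where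
  "run_edge i = (run_pos s0 s1 orig i, run_pos s0 s1 orig (Suc i))"

definition visits :: "nat \<Rightarrow> 'v \<Rightarrow> nat" where
  "visits T v = card {i. i < T \<and> run_pos s0 s1 orig i = v}"

definition traversals :: "nat \<Rightarrow> 'v \<times> 'v \<Rightarrow> nat" where
  "traversals T e = card {i. i < T \<and> run_edge i = e}"

lemma visits_Suc: "visits (Suc T) v = visits T v + of_bool (run_pos s0 s1 orig T = v)"
  by (simp add: visits_def card_lessThan_filter_eq_sum)

lemma traversals_Suc: "traversals (Suc T) e = traversals T e + of_bool (run_edge T = e)"
  by (simp add: traversals_def card_lessThan_filter_eq_sum)

lemma run_profile_eq_traversals:
  "run_profile s0 s1 orig dest = traversals (run_length s0 s1 orig dest)"
  by (simp add: run_profile_def traversals_def run_edge_def fun_eq_iff)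

lemma run_state_switches:
  "(run_step ^^ T) (orig, s0, s1) =
     (run_pos s0 s1 orig T,
      \<lambda>w. if even (visits T w) then s0 w else s1 w,
      \<lambda>w. if even (visits T w) then s1 w else s0 w)"
proof (induction T)
  case 0
  show ?case by (simp add: visits_def)
next
  case (Suc T)
  define p where "p = run_pos s0 s1 orig T"
  define cur where "cur = (\<lambda>w. if even (visits T w) then s0 w else s1 w)"
  define nxt where "nxt = (\<lambda>w. if even (visits T w) then s1 w else s0 w)"
  have step: "(run_step ^^ Suc T) (orig, s0, s1) = (cur p, cur(p := nxt p), nxt(p := cur p))"
    using Suc.IH by (simp only: p_def cur_def nxt_def funpow.simps comp_apply run_step.simps)
  then have "run_pos s0 s1 orig (Suc T) = cur p"
    by (simp only: run_pos_def fst_conv)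
  moreover have "cur(p := nxt p) = (\<lambda>w. if even (visits (Suc T) w) then s0 w else s1 w)"
    and "nxt(p := cur p) = (\<lambda>w. if even (visits (Suc T) w) then s1 w else s0 w)"
    by (auto simp: fun_eq_iff cur_def nxt_def p_def visits_Suc)
  ultimately show ?case using step by simp
qed

lemma run_pos_Suc:
  "run_pos s0 s1 orig (Suc T) =
     (if even (visits T (run_pos s0 s1 orig T)) then s0 else s1) (run_pos s0 s1 orig T)"
proof -
  have "run_pos s0 s1 orig (Suc T) = fst (run_step ((run_step ^^ T) (orig, s0, s1)))"
    by (simp only: run_pos_def funpow.simps comp_apply)
  then show ?thesis
    by (simp only: run_state_switches run_step.simps fst_conv) simp
qed

lemma run_pos_in_vertices:
  assumes "switch_graph V s0 s1" "orig \<in> V"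
  shows "run_pos s0 s1 orig T \<in> V"
proof (induction T)
  case 0
  show ?case using assms(2) by simp
next
  case (Suc T)
  then show ?case using assms(1) by (auto simp: run_pos_Suc switch_graph_def)
qed

lemma run_edge_in_sg_edges:
  assumes "switch_graph V s0 s1" "orig \<in> V"
  shows "run_edge T \<in> sg_edges V s0 s1"
  using run_pos_in_vertices[OF assms, of T]
  by (auto simp: run_edge_def run_pos_Suc sg_edges_def)

lemma traversals_out_edges:
  "traversals T (v, s0 v) = (if s0 v = s1 v then visits T v else (visits T v + 1) div 2) \<and>
   (s0 v \<noteq> s1 v \<longrightarrow> traversals T (v, s1 v) = visits T v div 2)"
proof (induction T)
  case 0
  show ?case by (simp add: traversals_def visits_def)
next
  case (Suc T)
  show ?case
  proof (cases "run_pos s0 s1 orig T = v")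
    case True
    with Suc.IH show ?thesis
      by (cases "even (visits T v)"; cases "s0 v = s1 v")
         (auto simp: traversals_Suc visits_Suc run_edge_def run_pos_Suc)
  next
    case False
    with Suc.IH show ?thesis by (simp add: traversals_Suc visits_Suc run_edge_def)
  qed
qed

lemma sum_traversals:
  assumes "finite A"
  shows "(\<Sum>e\<in>A. traversals T e) = (\<Sum>i<T. of_bool (run_edge i \<in> A))"
proof -
  have "(\<Sum>e\<in>A. traversals T e) = (\<Sum>i<T. \<Sum>e\<in>A. of_bool (run_edge i = e))"
    by (simp only: traversals_def card_lessThan_filter_eq_sum sum.swap[of _ A])
  also have "\<dots> = (\<Sum>i<T. of_bool (run_edge i \<in> A))"
    using assms by (simp add: of_bool_def sum.delta)
  finally show ?thesis .
qed

lemma sum_traversals_sg_edges: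
  assumes "switch_graph V s0 s1" "orig \<in> V"
  shows "(\<Sum>e\<in>sg_edges V s0 s1. traversals T e) = T"
  using run_edge_in_sg_edges[OF assms] finite_sg_edges[OF assms(1)] by (simp add: sum_traversals)

lemma visits_Suc_eq_entries:
  assumes "switch_graph V s0 s1" "orig \<in> V"
  shows "visits (Suc T) v = of_bool (v = orig) + (\<Sum>e\<in>in_edges (sg_edges V s0 s1) v. traversals T e)"
proof -
  have "finite (in_edges (sg_edges V s0 s1) v)"
    using finite_sg_edges[OF assms(1)] by (simp add: in_edges_def)
  then have "(\<Sum>e\<in>in_edges (sg_edges V s0 s1) v. traversals T e) =
               (\<Sum>i<T. of_bool (run_pos s0 s1 orig (Suc i) = v))"
    using run_edge_in_sg_edges[OF assms] by (simp add: sum_traversals in_edges_def run_edge_def)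
  moreover have "visits (Suc T) v = of_bool (orig = v) + (\<Sum>i<T. of_bool (run_pos s0 s1 orig (Suc i) = v))"
    by (simp only: visits_def card_lessThan_filter_eq_sum sum.lessThan_Suc_shift run_pos_0)
  ultimately show ?thesis by auto
qed

lemma traversals_out_edges_le:
  assumes "v \<in> V" "visits T v \<le> (\<Sum>e\<in>out_edges (sg_edges V s0 s1) v. x e)"
    and "x (v, s1 v) \<le> x (v, s0 v)" "x (v, s0 v) \<le> x (v, s1 v) + 1"
  shows "\<forall>e\<in>out_edges (sg_edges V s0 s1) v. traversals T e \<le> x e"
proof (cases "s0 v = s1 v")
  case True
  then show ?thesis
    using assms traversals_out_edges[of T v] by (simp add: out_edges_sg_edges)
next
  case False
  then show ?thesis
    using assms traversals_out_edges[of T v] balanced_halves_le[of "visits T v"]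
    by (simp add: out_edges_sg_edges)
qed

lemma traversals_le_switching_flow:
  assumes sg: "switch_graph V s0 s1" and oV: "orig \<in> V"
    and flow: "switching_flow V s0 s1 orig dest x"
    and avoids: "\<forall>i<T. run_pos s0 s1 orig i \<noteq> dest"
  shows "\<forall>e\<in>sg_edges V s0 s1. traversals T e \<le> x e"
  using avoids
proof (induction T)
  case 0
  show ?case by (simp add: traversals_def)
next
  case (Suc T)
  let ?E = "sg_edges V s0 s1"
  define v where "v = run_pos s0 s1 orig T"
  have IH: "\<forall>e\<in>?E. traversals T e \<le> x e"
    using Suc by simp
  have v: "v \<in> V" "v \<noteq> dest"
    using run_pos_in_vertices[OF sg oV] Suc.prems by (auto simp: v_def)
  have "visits (Suc T) v = of_bool (v = orig) + (\<Sum>e\<in>in_edges ?E v. traversals T e)"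
    by (rule visits_Suc_eq_entries[OF sg oV])
  also have "\<dots> \<le> of_bool (v = orig) + (\<Sum>e\<in>in_edges ?E v. x e)"
    using IH by (auto simp: in_edges_def intro!: sum_mono)
  also have "\<dots> = (\<Sum>e\<in>out_edges ?E v. x e)"
    using switching_flow_outflow[OF flow v] by simp
  finally have "\<forall>e\<in>out_edges ?E v. traversals (Suc T) e \<le> x e"
    using flow v by (intro traversals_out_edges_le) (auto simp: switching_flow_def)
  moreover have "traversals (Suc T) e = traversals T e" if "fst e \<noteq> v" for e
    using that by (auto simp: traversals_Suc run_edge_def v_def)
  ultimately show ?case
    using IH by (metis (mono_tags, lifting) mem_Collect_eq out_edges_def)
qed

lemma steps_avoiding_dest_le_flow_total:
  assumes "switch_graph V s0 s1" "orig \<in> V" "switching_flow V s0 s1 orig dest x"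
    and "\<forall>i<T. run_pos s0 s1 orig i \<noteq> dest"
  shows "T \<le> (\<Sum>e\<in>sg_edges V s0 s1. x e)"
proof -
  have "T = (\<Sum>e\<in>sg_edges V s0 s1. traversals T e)"
    using sum_traversals_sg_edges[OF assms(1,2)] by simp
  also have "\<dots> \<le> (\<Sum>e\<in>sg_edges V s0 s1. x e)"
    using traversals_le_switching_flow[OF assms] by (intro sum_mono) auto
  finally show ?thesis .
qed

end

theorem lemma1:
  fixes V :: "'v set" and s0 s1 :: "'v \<Rightarrow> 'v" and orig dest :: 'v
    and x :: "'v \<times> 'v \<Rightarrow> nat"
  assumes "switch_graph V s0 s1"
    and "orig \<in> V" and "dest \<in> V" and "orig \<noteq> dest"
    and "switching_flow V s0 s1 orig dest x"
  shows "run_terminates s0 s1 orig dest \<and>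
         (\<forall>e\<in>sg_edges V s0 s1. run_profile s0 s1 orig dest e \<le> x e)"
proof
  show "run_terminates s0 s1 orig dest"
    using steps_avoiding_dest_le_flow_total[OF assms(1,2,5), of "Suc (\<Sum>e\<in>sg_edges V s0 s1. x e)"]
    by (auto simp: run_terminates_def)
  then have "\<forall>i<run_length s0 s1 orig dest. run_pos s0 s1 orig i \<noteq> dest"
    unfolding run_length_def using not_less_Least by blast
  then show "\<forall>e\<in>sg_edges V s0 s1. run_profile s0 s1 orig dest e \<le> x e"
    using traversals_le_switching_flow[OF assms(1,2,5)] by (simp add: run_profile_eq_traversals)
qed

end
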